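(* Let $A \in \mathbb{C}^{n \times n}$ and let $\beta \geq 1$ be a real number bounding the spectral radius of $A$ (i.e. every eigenvalue $\lambda$ of $A$ satisfies $|\lambda| \le \beta$). Let $\mu_A(X) = \sum_{i=0}^{d} m_i X^i$ be the minimal polynomial of $A$, of degree $d$. Then for all $i$, $$|m_i| \leq \begin{cases} \beta^d & \text{if } d \leq \beta, \\ \min\left\{ \sqrt{\beta d}^{\,d}\ ;\ \sqrt{\frac{2}{d\pi}}\, 2^d \beta^d \right\} & \text{otherwise.} \end{cases}$$
   Context: The minimal polynomial of $A$ is the monic polynomial of least degree annihilating $A$. *)

theory Defs
  imports "Jordan_Normal_Form.Char_Poly"
begin

text \<open>Evaluation of a polynomial at a square matrix (Horner scheme):
  for p = sum c_i X^i this is sum c_i A^i, with A^0 the identity of size dim_row A.\<close>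
definition mat_poly :: "'a :: comm_ring_1 poly \<Rightarrow> 'a mat \<Rightarrow> 'a mat" where
  "mat_poly p A = foldr (\<lambda>c M. c \<cdot>\<^sub>m 1\<^sub>m (dim_row A) + A * M) (coeffs p)
                        (0\<^sub>m (dim_row A) (dim_row A))"

definition is_min_poly :: "'a :: field mat \<Rightarrow> 'a poly \<Rightarrow> bool" where
  "is_min_poly A p \<longleftrightarrow> lead_coeff p = 1 \<and> mat_poly p A = 0\<^sub>m (dim_row A) (dim_row A) \<and>
     (\<forall>q. lead_coeff q = 1 \<and> mat_poly q A = 0\<^sub>m (dim_row A) (dim_row A) \<longrightarrow> degree p \<le> degree q)"

end

theory Submission
  imports Defs "HOL-Analysis.Analysis"
begin

text \<open>Every root of the minimal polynomial is an eigenvalue, so \<open>m\<close> is the product of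
  \<open>d\<close> linear factors \<open>X - \<lambda>\<close> with \<open>|\<lambda>| \<le> \<beta>\<close>, and expanding the product gives
  \<open>|m\<^sub>i| \<le> (d choose i) \<beta>^(d - i)\<close>. The first two bounds follow from
  \<open>d choose i \<le> d^min i (d - i)\<close>, the third from the estimate
  \<open>(2k choose k) \<le> 4^k / sqrt (\<pi> k)\<close> of the central binomial coefficient, which is the
  log-convexity of \<open>\<Gamma>\<close> at \<open>k\<close>, \<open>k + 1/2\<close>, \<open>k + 1\<close>.\<close>

lemma mat_poly_carrier: "A \<in> carrier_mat n n \<Longrightarrow> mat_poly p A \<in> carrier_mat n n"
  by (induction p) (auto simp: mat_poly_def cCons_def)

lemma mat_poly_0 [simp]: "A \<in> carrier_mat n n \<Longrightarrow> mat_poly 0 A = 0\<^sub>m n n"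
  by (simp add: mat_poly_def)

lemma mat_poly_pCons:
  assumes "A \<in> carrier_mat n n"
  shows "mat_poly (pCons a p) A = a \<cdot>\<^sub>m 1\<^sub>m n + A * mat_poly p A"
proof (cases "p = 0 \<and> a = 0")
  case True
  then show ?thesis using assms by (auto simp: mat_poly_def)
next
  case False
  then have "coeffs (pCons a p) = a # coeffs p" by (auto simp: cCons_def)
  then show ?thesis using assms by (simp add: mat_poly_def)
qed

lemma mat_poly_add:
  assumes A: "A \<in> carrier_mat n n"
  shows "mat_poly (p + q) A = mat_poly p A + mat_poly q A"
proof (induction p q rule: poly_induct2)
  case 0
  then show ?case using A by simp
next
  case (pCons a p b q)
  have P: "mat_poly p A \<in> carrier_mat n n" and Q: "mat_poly q A \<in> carrier_mat n n"
    using A by (auto intro: mat_poly_carrier)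
  have "mat_poly (pCons a p + pCons b q) A = (a + b) \<cdot>\<^sub>m 1\<^sub>m n + A * (mat_poly p A + mat_poly q A)"
    using pCons A by (simp add: mat_poly_pCons)
  also have "\<dots> = (a \<cdot>\<^sub>m 1\<^sub>m n + A * mat_poly p A) + (b \<cdot>\<^sub>m 1\<^sub>m n + A * mat_poly q A)"
    using A P Q by (simp add: mult_add_distrib_mat add_smult_distrib_left_mat, auto simp: algebra_simps)
  finally show ?case using A by (simp add: mat_poly_pCons)
qed

lemma mat_poly_smult:
  assumes A: "A \<in> carrier_mat n n"
  shows "mat_poly (Polynomial.smult c p) A = c \<cdot>\<^sub>m mat_poly p A"
proof (induction p)
  case 0
  then show ?case using A by simp
next
  case (pCons a p)
  have P: "mat_poly p A \<in> carrier_mat n n" using A by (rule mat_poly_carrier)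
  have "c \<cdot>\<^sub>m (a \<cdot>\<^sub>m 1\<^sub>m n) = (c * a) \<cdot>\<^sub>m 1\<^sub>m n" by (rule eq_matI) auto
  then have "(c * a) \<cdot>\<^sub>m 1\<^sub>m n + A * (c \<cdot>\<^sub>m mat_poly p A) = c \<cdot>\<^sub>m (a \<cdot>\<^sub>m 1\<^sub>m n + A * mat_poly p A)"
    using A P by (subst add_smult_distrib_left_mat[of _ n n]) (auto simp: mult_smult_distrib[of _ n n _ n])
  then show ?case using pCons A by (simp add: mat_poly_pCons)
qed

lemma mat_poly_pCons_0:
  assumes A: "A \<in> carrier_mat n n"
  shows "mat_poly (pCons 0 p) A = A * mat_poly p A"
proof -
  have "0 \<cdot>\<^sub>m 1\<^sub>m n = (0\<^sub>m n n :: 'a mat)" by (rule eq_matI) auto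
  then show ?thesis using A mat_poly_carrier[OF A] by (simp add: mat_poly_pCons)
qed

lemma mat_poly_linear_factor:
  assumes A: "A \<in> carrier_mat n n"
  shows "mat_poly ([:-l, 1:] * q) A = char_matrix A l * mat_poly q A"
proof -
  have Q: "mat_poly q A \<in> carrier_mat n n" using A by (rule mat_poly_carrier)
  have "[:-l, 1:] * q = Polynomial.smult (-l) q + pCons 0 q" by simp
  then have "mat_poly ([:-l, 1:] * q) A = (-l) \<cdot>\<^sub>m mat_poly q A + A * mat_poly q A"
    by (simp only: mat_poly_add[OF A] mat_poly_smult[OF A] mat_poly_pCons_0[OF A])
  also have "\<dots> = (A + (-l) \<cdot>\<^sub>m 1\<^sub>m n) * mat_poly q A"
    using A Q by (simp add: add_mult_distrib_mat[of A n n] mult_smult_assoc_mat[of _ n n _ n]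
        comm_add_mat[of _ n n])
  finally show ?thesis using A by (simp add: char_matrix_def)
qed

lemma eigenvalue_if_char_matrix_mult_eq_0:
  fixes A :: "'a :: field mat"
  assumes A: "A \<in> carrier_mat n n" and Q: "Q \<in> carrier_mat n k"
    and "Q \<noteq> 0\<^sub>m n k" and "char_matrix A l * Q = 0\<^sub>m n k"
  shows "eigenvalue A l"
proof -
  obtain i j where ij: "i < n" "j < k" "Q $$ (i, j) \<noteq> 0"
    using \<open>Q \<noteq> 0\<^sub>m n k\<close> Q by (metis carrier_matD eq_matI index_zero_mat)
  have "col Q j $ i \<noteq> 0"
    using ij Q by auto
  then have "col Q j \<noteq> 0\<^sub>v n"
    using ij by auto
  moreover have "char_matrix A l *\<^sub>v col Q j = col (char_matrix A l * Q) j"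
    using A Q ij by (auto simp: mult_mat_vec_def)
  ultimately show ?thesis
    unfolding eigenvalue_char_matrix[OF A] using Q ij \<open>char_matrix A l * Q = 0\<^sub>m n k\<close>
    by (intro exI[of _ "col Q j"]) auto
qed

text \<open>If \<open>m = (X - l) q\<close>, then \<open>q(A) \<noteq> 0\<close> by minimality of \<open>m\<close>, and every nonzero
  column of \<open>q(A)\<close> is an eigenvector of \<open>A\<close> for \<open>l\<close>.\<close>
lemma is_min_poly_root_imp_eigenvalue:
  fixes A :: "'a :: field mat"
  assumes A: "A \<in> carrier_mat n n" and min: "is_min_poly A m" and root: "poly m l = 0"
  shows "eigenvalue A l"
proof -
  obtain q where m: "m = [:-l, 1:] * q"
    using root by (metis dvdE poly_eq_0_iff_dvd)
  have "m \<noteq> 0" using min by (auto simp: is_min_poly_def)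
  then have "q \<noteq> 0" using m by auto
  then have deg: "degree m = degree q + 1"
    unfolding m by (subst degree_mult_eq) auto
  have "lead_coeff m = lead_coeff q"
    unfolding m lead_coeff_mult by simp
  then have "lead_coeff q = 1"
    using min by (simp add: is_min_poly_def)
  then have nonzero: "mat_poly q A \<noteq> 0\<^sub>m n n"
    using min A deg by (auto simp: is_min_poly_def)
  have "mat_poly m A = 0\<^sub>m n n"
    using min A by (simp add: is_min_poly_def)
  then have "char_matrix A l * mat_poly q A = 0\<^sub>m n n"
    unfolding m mat_poly_linear_factor[OF A] .
  then show ?thesis
    by (rule eigenvalue_if_char_matrix_mult_eq_0[OF A mat_poly_carrier[OF A] nonzero])
qed

lemma norm_coeff_prod_linear_le:
  fixes as :: "'a :: real_normed_field list"
  assumes "\<forall>a\<in>set as. norm a \<le> \<beta>"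
  shows "norm (coeff (\<Prod>a\<leftarrow>as. [:-a, 1:]) i) \<le> real (length as choose i) * \<beta> ^ (length as - i)"
  using assms
proof (induction as arbitrary: i)
  case Nil
  then show ?case by (cases i) auto
next
  case (Cons a as)
  define p where "p = (\<Prod>a\<leftarrow>as. [:-a, 1:])"
  define n where "n = length as"
  have IH: "norm (coeff p j) \<le> real (n choose j) * \<beta> ^ (n - j)" for j
    using Cons unfolding p_def n_def by auto
  have a: "norm a \<le> \<beta>"
    using Cons.prems by simp
  then have "\<beta> \<ge> 0"
    using norm_ge_zero[of a] by linarith
  have prod: "(\<Prod>a\<leftarrow>a # as. [:-a, 1:]) = pCons 0 p - Polynomial.smult a p"
    unfolding p_def by simp
  have scaled: "norm (a * coeff p j) \<le> real (n choose j) * \<beta> ^ (n - j + 1)" for j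
  proof -
    have "norm (a * coeff p j) \<le> \<beta> * (real (n choose j) * \<beta> ^ (n - j))"
      unfolding norm_mult using a IH \<open>\<beta> \<ge> 0\<close> by (intro mult_mono) auto
    then show ?thesis by (simp add: algebra_simps)
  qed
  show ?case
  proof (cases i)
    case 0
    then show ?thesis
      unfolding prod using scaled[of 0] by (simp add: n_def)
  next
    case (Suc j)
    have shifted: "real (n choose i) * \<beta> ^ (n - i + 1) = real (n choose i) * \<beta> ^ (n - j)"
      using Suc by (cases "j < n") (auto simp: binomial_eq_0 Suc_diff_Suc)
    have "norm (coeff (\<Prod>a\<leftarrow>a # as. [:-a, 1:]) i) \<le> norm (coeff p j) + norm (a * coeff p i)"
      unfolding prod using Suc by (simp add: norm_triangle_ineq4)
    also have "\<dots> \<le> real (n choose j) * \<beta> ^ (n - j) + real (n choose i) * \<beta> ^ (n - j)"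
      using IH[of j] scaled[of i] shifted by linarith
    also have "\<dots> = real (Suc n choose i) * \<beta> ^ (Suc n - i)"
      using Suc by (simp add: algebra_simps)
    finally show ?thesis by (simp add: n_def)
  qed
qed

lemma norm_coeff_monic_le:
  fixes p :: "complex poly"
  assumes "lead_coeff p = 1" and "\<forall>z. poly p z = 0 \<longrightarrow> cmod z \<le> \<beta>"
  shows "cmod (coeff p i) \<le> real (degree p choose i) * \<beta> ^ (degree p - i)"
proof -
  obtain as where "Polynomial.smult (lead_coeff p) (\<Prod>a\<leftarrow>as. [:-a, 1:]) = p"
    and len: "length as = degree p"
    using fundamental_theorem_algebra_factorized by blast
  then have p: "p = (\<Prod>a\<leftarrow>as. [:-a, 1:])"
    using assms(1) by simp
  have "poly p a = 0" if "a \<in> set as" for a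
    using that unfolding p by (induction as) auto
  then have "\<forall>a\<in>set as. cmod a \<le> \<beta>"
    using assms(2) by blast
  from norm_coeff_prod_linear_le[OF this, of i] show ?thesis
    by (simp flip: p len)
qed

lemma binomial_le_power_min: "n choose k \<le> n ^ min k (n - k)"
proof (cases "k \<le> n")
  case True
  then have "n choose k \<le> n ^ k" and "n choose k \<le> n ^ (n - k)"
    using binomial_le_pow[of k n] binomial_le_pow[of "n - k" n] binomial_symmetric[OF True]
    by auto
  then show ?thesis by (simp add: min_def)
next
  case False
  then show ?thesis by (simp add: binomial_eq_0)
qed

lemma binomial_mult_power_le_power:
  fixes \<beta> :: real
  assumes "real d \<le> \<beta>"
  shows "real (d choose i) * \<beta> ^ (d - i) \<le> \<beta> ^ d"
proof (cases "i \<le> d")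
  case True
  have "real (d choose i) \<le> real d ^ i"
    using binomial_le_pow[OF True] by (metis of_nat_le_iff of_nat_power)
  also have "\<dots> \<le> \<beta> ^ i"
    using assms by (intro power_mono) auto
  finally have "real (d choose i) * \<beta> ^ (d - i) \<le> \<beta> ^ i * \<beta> ^ (d - i)"
    using assms by (intro mult_right_mono) auto
  then show ?thesis
    using True by (simp flip: power_add)
next
  case False
  then show ?thesis
    using assms by (simp add: binomial_eq_0)
qed

lemma binomial_mult_power_le_sqrt_power:
  fixes \<beta> :: real
  assumes "1 \<le> \<beta>" and "\<beta> \<le> real d"
  shows "real (d choose i) * \<beta> ^ (d - i) \<le> sqrt (\<beta> * real d) ^ d"
proof (cases "i \<le> d")
  case False
  then show ?thesis
    using assms by (simp add: binomial_eq_0)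
next
  case True
  define s where "s = sqrt (\<beta> * real d)"
  define k where "k = d - i"
  have s2: "s ^ 2 = \<beta> * real d"
    using assms unfolding s_def by simp
  have "1 * 1 \<le> \<beta> * real d"
    using assms by (intro mult_mono) auto
  then have "\<beta> \<le> s" and "1 \<le> s"
    using assms unfolding s_def by (auto intro: real_le_rsqrt simp: power2_eq_square)
  have binom: "real (d choose i) \<le> real d ^ min i k"
    using binomial_le_power_min[of d i] unfolding k_def by (metis of_nat_le_iff of_nat_power)
  show ?thesis
  proof (cases "i \<le> k")
    case True
    have "real (d choose i) * \<beta> ^ k \<le> real d ^ i * \<beta> ^ k"
      using binom True assms by (intro mult_right_mono) auto
    also have "\<dots> = (s ^ 2) ^ i * \<beta> ^ (k - i)"
      using True by (simp add: s2 power_mult_distrib flip: power_add)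
    also have "\<dots> \<le> (s ^ 2) ^ i * s ^ (k - i)"
      using \<open>\<beta> \<le> s\<close> assms by (intro mult_left_mono power_mono) auto
    also have "\<dots> = s ^ d"
      using True \<open>i \<le> d\<close> unfolding k_def by (simp flip: power_mult power_add)
    finally show ?thesis by (simp add: k_def s_def)
  next
    case False
    have "real (d choose i) * \<beta> ^ k \<le> real d ^ k * \<beta> ^ k"
      using binom False assms by (intro mult_right_mono) auto
    also have "\<dots> = s ^ (2 * k)"
      by (simp add: power_mult s2 power_mult_distrib)
    also have "\<dots> \<le> s ^ d"
      using False \<open>1 \<le> s\<close> unfolding k_def by (intro power_increasing) auto
    finally show ?thesis by (simp add: k_def s_def)
  qed
qed

lemma Gamma_nat_plus_half: "Gamma (real n + 1/2) = sqrt pi * fact (2 * n) / (4 ^ n * fact n)"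
proof -
  have "(1/2 :: real) \<notin> \<int>\<^sub>\<le>\<^sub>0"
    by (auto dest: nonpos_Ints_nonpos)
  then have "Gamma (real n + 1/2) = sqrt pi * pochhammer (1/2) n"
    by (simp add: pochhammer_Gamma Gamma_one_half_real add.commute)
  moreover have "fact (2 * n) = (4 ^ n * pochhammer (1/2) n * fact n :: real)"
    using fact_double[of n] by (simp add: power_mult)
  ultimately show ?thesis by simp
qed

lemma Gamma_plus_half_squared_le:
  fixes x :: real
  assumes "x > 0"
  shows "Gamma (x + 1/2) ^ 2 \<le> Gamma x * Gamma (x + 1)"
proof -
  have pos: "Gamma x > 0" "Gamma (x + 1) > 0" "Gamma (x + 1/2) > 0"
    using assms by auto
  have "(ln \<circ> Gamma) ((1 - 1/2) *\<^sub>R x + (1/2) *\<^sub>R (x + 1))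
        \<le> (1 - 1/2) * (ln \<circ> Gamma) x + (1/2) * (ln \<circ> Gamma) (x + 1)"
    by (rule convex_onD[OF log_convex_Gamma_real]) (use assms in auto)
  moreover have "(1 - 1/2) *\<^sub>R x + (1/2) *\<^sub>R (x + 1) = x + 1/2"
    by (simp add: field_simps)
  ultimately have "ln (Gamma (x + 1/2) ^ 2) \<le> ln (Gamma x * Gamma (x + 1))"
    using pos by (simp add: ln_realpow ln_mult)
  then show ?thesis
    using pos by simp
qed

lemma central_binomial_le:
  assumes "n \<ge> 1"
  shows "real ((2 * n) choose n) \<le> 4 ^ n / sqrt (pi * real n)"
proof -
  have "n > 0" using assms by simp
  have binom: "real ((2 * n) choose n) = fact (2 * n) / fact n ^ 2"
    by (simp add: binomial_fact power2_eq_square mult_2)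
  have "Gamma (real n + 1) = fact n"
    using Gamma_fact[of n] by (simp add: add.commute)
  moreover have "Gamma (real n + 1) = real n * Gamma (real n)"
    using \<open>n > 0\<close> by (intro Gamma_plus1) (simp add: of_nat_in_nonpos_Ints_iff)
  ultimately have "Gamma (real n) * Gamma (real n + 1) = fact n ^ 2 / real n"
    using \<open>n > 0\<close> by (simp add: field_simps power2_eq_square)
  moreover have "Gamma (real n + 1/2) = sqrt pi * real ((2 * n) choose n) * fact n / 4 ^ n"
    unfolding Gamma_nat_plus_half binom by (simp add: field_simps power2_eq_square)
  ultimately have "(sqrt pi * real ((2 * n) choose n) * fact n / 4 ^ n) ^ 2 \<le> fact n ^ 2 / real n"
    using Gamma_plus_half_squared_le[of "real n"] \<open>n > 0\<close> by simp
  then have "real ((2 * n) choose n) ^ 2 \<le> (4 ^ n / sqrt (pi * real n)) ^ 2"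
    using \<open>n > 0\<close> by (simp add: power_mult_distrib power_divide field_simps)
  then show ?thesis
    by (rule power2_le_imp_le) simp
qed

lemma binomial_le_central_bound:
  assumes "d \<ge> 1"
  shows "real (d choose i) \<le> sqrt (2 / (real d * pi)) * 2 ^ d"
proof -
  have "real (d choose i) \<le> real (d choose (d div 2))"
    using binomial_maximum by simp
  also have "\<dots> \<le> 2 ^ d / sqrt (pi * (real d / 2))"
  proof (cases "even d")
    case True
    then obtain n where d: "d = 2 * n" and "n \<ge> 1"
      using assms by auto
    have "(4 :: real) ^ n = 2 ^ d"
      by (simp add: d power_mult)
    then show ?thesis
      using central_binomial_le[OF \<open>n \<ge> 1\<close>] by (simp add: d)
  next
    case False
    then obtain n where d: "d = 2 * n + 1"
      using oddE by blast
    have "Suc d choose Suc (d div 2) = 2 * (d choose (d div 2))"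
      using central_binomial_odd[OF False] by simp
    then have "2 * real (d choose (d div 2)) \<le> 4 ^ (n + 1) / sqrt (pi * (real n + 1))"
      using central_binomial_le[of "n + 1"] by (simp add: d add.commute)
    also have "\<dots> = 2 * (2 ^ d / sqrt (pi * (real n + 1)))"
      by (simp add: d power_mult)
    finally have "real (d choose (d div 2)) \<le> 2 ^ d / sqrt (pi * (real n + 1))"
      by linarith
    also have "\<dots> \<le> 2 ^ d / sqrt (pi * (real d / 2))"
      using d by (intro divide_left_mono real_sqrt_le_mono mult_left_mono mult_pos_pos) auto
    finally show ?thesis .
  qed
  also have "\<dots> = sqrt (2 / (real d * pi)) * 2 ^ d"
    by (simp add: real_sqrt_divide field_simps)
  finally show ?thesis .
qed

lemma binomial_mult_power_le_central_bound:
  fixes \<beta> :: real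
  assumes "1 \<le> \<beta>" and "d \<ge> 1"
  shows "real (d choose i) * \<beta> ^ (d - i) \<le> sqrt (2 / (real d * pi)) * 2 ^ d * \<beta> ^ d"
proof -
  have "real (d choose i) * \<beta> ^ (d - i) \<le> real (d choose i) * \<beta> ^ d"
    using assms by (intro mult_left_mono power_increasing) auto
  also have "\<dots> \<le> sqrt (2 / (real d * pi)) * 2 ^ d * \<beta> ^ d"
    using binomial_le_central_bound[OF assms(2)] assms by (intro mult_right_mono) auto
  finally show ?thesis .
qed

theorem lemma3:
  fixes A :: "complex mat" and n :: nat and \<beta> :: real and m :: "complex poly" and d :: nat
  assumes "A \<in> carrier_mat n n"
    and "\<beta> \<ge> 1"
    and "\<forall>ev. eigenvalue A ev \<longrightarrow> cmod ev \<le> \<beta>"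
    and "is_min_poly A m"
    and "d = degree m"
  shows "\<forall>i. cmod (coeff m i) \<le>
           (if real d \<le> \<beta> then \<beta> ^ d
            else min (sqrt (\<beta> * real d) ^ d) (sqrt (2 / (real d * pi)) * 2 ^ d * \<beta> ^ d))"
proof
  fix i
  have "lead_coeff m = 1"
    using assms(4) by (simp add: is_min_poly_def)
  moreover have "\<forall>z. poly m z = 0 \<longrightarrow> cmod z \<le> \<beta>"
    using is_min_poly_root_imp_eigenvalue[OF assms(1,4)] assms(3) by blast
  ultimately have bound: "cmod (coeff m i) \<le> real (d choose i) * \<beta> ^ (d - i)"
    unfolding assms(5) by (rule norm_coeff_monic_le)
  show "cmod (coeff m i) \<le>
           (if real d \<le> \<beta> then \<beta> ^ d
            else min (sqrt (\<beta> * real d) ^ d) (sqrt (2 / (real d * pi)) * 2 ^ d * \<beta> ^ d))"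
  proof (cases "real d \<le> \<beta>")
    case True
    then show ?thesis
      using bound binomial_mult_power_le_power[OF True, of i] by simp
  next
    case False
    then have "d \<ge> 1"
      using assms(2) by simp
    then show ?thesis
      using False bound assms(2) binomial_mult_power_le_sqrt_power[of \<beta> d i]
        binomial_mult_power_le_central_bound[of \<beta> d i] by simp
  qed
qed

end
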